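(* For integers $n\ge m\ge k\ge0$, \[\Big(\frac nm\Big)^k\le\Big(\frac nm\Big)^k\exp\!\Big(\frac{n-m}{nm}\frac{k(k-1)}{2}\Big)\le\binom nk\Big/\binom mk\le\frac{\exp(n\,\mathrm H(k/n))}{\exp(m\,\mathrm H(k/m))}\le\Big(\frac nm\Big)^k e^{k^2/m}.\]
   Context: $\mathrm H(x)=x\log(1/x)+(1-x)\log(1/(1-x))$ is the binary entropy function with natural logarithm (with $\mathrm H(0)=0$). *)

theory Defs
  imports Complex_Main
begin

definition bin_entropy :: "real \<Rightarrow> real" where
  "bin_entropy x =
     (if x = 0 then 0 else x * ln (1 / x)) + (if x = 1 then 0 else (1 - x) * ln (1 / (1 - x)))"

end

theory Submission
  imports Defs
begin

text \<open>Write \<open>E k n = n^n / (k^k (n - k)^(n - k))\<close>, which equals \<open>exp (n H(k/n))\<close>.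
  The lower bound compares \<open>C(n,k) / C(m,k) = \<Prod>i<k. (n - i) / (m - i)\<close> factor by factor,
  using \<open>1 - x \<le> exp (- x)\<close>. The middle inequality holds because \<open>C(n,k) / E k n\<close> is
  antitone in \<open>n\<close>: passing from \<open>n\<close> to \<open>n + 1\<close> multiplies it by \<open>a (n - k) / a n\<close>, where
  \<open>a j = (1 + 1/j)^j\<close> is increasing. For the upper bound, \<open>(1 + x/N)^N \<le> exp x\<close> estimates
  both \<open>(n / (n - k))^(n - k)\<close> from above and \<open>(m / (m - k))^(m - k)\<close> from below.\<close>

lemma ratio_exp_le_ratio_diff:
  assumes "i < m" "m \<le> n"
  shows "real n / real m * exp (real i * ((real n - real m) / (real n * real m)))
           \<le> (real n - real i) / (real m - real i)"
proof -
  define a where "a = real i / real n"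
  define b where "b = real i / real m"
  have t: "real i * ((real n - real m) / (real n * real m)) = b - a" and "b < 1" "0 \<le> a"
    using assms by (auto simp: a_def b_def field_simps)
  have "a \<le> b"
    using assms unfolding a_def b_def by (intro frac_le) simp_all
  have "1 - b \<le> (1 - a) * (1 + (a - b))"
    using \<open>a \<le> b\<close> \<open>0 \<le> a\<close> by (simp add: algebra_simps mult_left_mono)
  also have "\<dots> \<le> (1 - a) * exp (a - b)"
    using \<open>a \<le> b\<close> \<open>b < 1\<close> by (intro mult_left_mono exp_ge_add_one_self) simp
  finally have "exp (b - a) \<le> (1 - a) / (1 - b)"
    using \<open>b < 1\<close> by (simp add: exp_diff field_simps)
  then have "real n / real m * exp (b - a) \<le> real n / real m * ((1 - a) / (1 - b))"
    by (rule mult_left_mono) simp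
  also have "\<dots> = (real n - real i) / (real m - real i)"
    using assms by (simp add: a_def b_def field_simps)
  finally show ?thesis unfolding t .
qed

lemma gauss_sum_lessThan: "(\<Sum>i<k. of_nat i) = (of_nat k * (of_nat k - 1) / 2 :: 'a::field_char_0)"
  by (induction k) (simp_all add: field_simps)

lemma binomial_ratio_eq_prod:
  assumes "k \<le> m" "k \<le> n"
  shows "real (n choose k) / real (m choose k) = (\<Prod>i<k. (real n - real i) / (real m - real i))"
proof -
  have "real (n choose k) / real (m choose k)
      = (\<Prod>i<k. real (n - i) / real (k - i)) / (\<Prod>i<k. real (m - i) / real (k - i))"
    using assms by (simp add: binomial_altdef_of_nat atLeast0LessThan)
  also have "\<dots> = (\<Prod>i<k. (real n - real i) / (real m - real i))"
    using assms by (simp add: prod_dividef[symmetric] of_nat_diff)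
  finally show ?thesis .
qed

lemma binomial_ratio_ge_exp:
  assumes "k \<le> m" "m \<le> n"
  shows "(real n / real m) ^ k * exp ((real n - real m) / (real n * real m) * (real k * (real k - 1) / 2))
           \<le> real (n choose k) / real (m choose k)"
proof -
  define c where "c = (real n - real m) / (real n * real m)"
  have "(\<Prod>i<k. real n / real m * exp (real i * c)) = (real n / real m) ^ k * exp (\<Sum>i<k. real i * c)"
    unfolding prod.distrib prod_constant card_lessThan by (simp add: exp_sum)
  also have "(\<Sum>i<k. real i * c) = c * (real k * (real k - 1) / 2)"
    unfolding sum_distrib_right[symmetric] gauss_sum_lessThan by (rule mult.commute)
  finally have "(real n / real m) ^ k * exp (c * (real k * (real k - 1) / 2))
      = (\<Prod>i<k. real n / real m * exp (real i * c))" ..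
  also have "\<dots> \<le> (\<Prod>i<k. (real n - real i) / (real m - real i))"
    using ratio_exp_le_ratio_diff assms unfolding c_def by (intro prod_mono) auto
  also have "\<dots> = real (n choose k) / real (m choose k)"
    using assms by (simp add: binomial_ratio_eq_prod)
  finally show ?thesis unfolding c_def .
qed

definition binomial_entropy_bound :: "nat \<Rightarrow> nat \<Rightarrow> real" where
  "binomial_entropy_bound k n = real n ^ n / (real k ^ k * real (n - k) ^ (n - k))"

lemma binomial_entropy_bound_pos: "k \<le> n \<Longrightarrow> binomial_entropy_bound k n > 0"
  unfolding binomial_entropy_bound_def by (cases "n = 0"; cases "k = 0"; cases "k = n") auto

lemma exp_mult_bin_entropy:
  assumes "k \<le> n"
  shows "exp (real n * bin_entropy (real k / real n)) = binomial_entropy_bound k n"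
proof -
  consider "k = 0" | "k = n" | "0 < k" "k < n" using assms by linarith
  then show ?thesis
  proof cases
    case 3
    then have "real n * bin_entropy (real k / real n)
        = real n * ln (real n) - real k * ln (real k) - real (n - k) * ln (real (n - k))"
      by (simp add: bin_entropy_def ln_div of_nat_diff field_simps)
    also have "\<dots> = ln (binomial_entropy_bound k n)"
      using 3 by (simp add: binomial_entropy_bound_def ln_div ln_mult ln_realpow)
    finally show ?thesis
      using binomial_entropy_bound_pos assms by simp
  qed (auto simp: binomial_entropy_bound_def bin_entropy_def)
qed

lemma one_plus_inverse_power_eq: "(1 + 1 / real j) ^ j = real (Suc j) ^ j / real j ^ j"
  by (cases "j = 0") (simp_all add: field_simps power_divide)

lemma incseq_one_plus_inverse_power: "incseq (\<lambda>n. (1 + 1 / real n) ^ n)"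
proof (rule incseq_SucI)
  fix j :: nat
  show "(1 + 1 / real j) ^ j \<le> (1 + 1 / real (Suc j)) ^ Suc j"
  proof (cases "j = 0")
    case False
    define x where "x = real j"
    define B where "B = ((x + 2) / (x + 1)) ^ Suc j"
    have x: "x > 0" "x * x + x * 2 + 1 > 0" using False by (simp_all add: x_def add_pos_pos)
    have "x / (x + 1) = 1 + real (Suc j) * (- 1 / (x + 1) ^ 2)"
      using x by (simp add: x_def field_simps power2_eq_square)
    also have "\<dots> \<le> (1 + (- 1 / (x + 1) ^ 2)) ^ Suc j"
      using x by (intro Bernoulli_inequality) (simp add: field_simps power2_eq_square)
    also have "1 + (- 1 / (x + 1) ^ 2) = x / (x + 1) * ((x + 2) / (x + 1))"
      using x by (simp add: field_simps power2_eq_square)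
    finally have "x / (x + 1) \<le> x / (x + 1) * ((x / (x + 1)) ^ j * B)"
      unfolding B_def power_mult_distrib power_Suc[of "x / (x + 1)"] mult.assoc .
    then have "1 \<le> (x / (x + 1)) ^ j * B"
      using x by (subst (asm) mult_le_cancel_left1) simp
    then have "((x + 1) / x) ^ j * 1 \<le> ((x + 1) / x) ^ j * ((x / (x + 1)) ^ j * B)"
      using x by (intro mult_left_mono) simp_all
    also have "\<dots> = B"
      using x by (simp add: mult.assoc[symmetric] power_mult_distrib[symmetric])
    finally show ?thesis
      using x by (simp add: B_def x_def field_simps)
  qed simp
qed

lemma binomial_div_entropy_bound_Suc_le:
  assumes "k \<le> n"
  shows "real (Suc n choose k) / binomial_entropy_bound k (Suc n)
           \<le> real (n choose k) / binomial_entropy_bound k n"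
proof -
  define j where "j = n - k"
  have Suc_j: "Suc n - k = Suc j" using assms by (simp add: j_def)
  have absorb: "real (Suc n choose k) * real (Suc j) = real (Suc n) * real (n choose k)"
    using binomial_absorb_comp[of "Suc n" k] unfolding Suc_j
    by (metis diff_Suc_1 mult.commute of_nat_mult)
  have "real (Suc j) ^ j / real j ^ j \<le> real (Suc n) ^ n / real n ^ n"
    using incseqD[OF incseq_one_plus_inverse_power, of j n] by (simp add: j_def one_plus_inverse_power_eq)
  moreover have "real i ^ i > 0" for i :: nat
    by (cases i) simp_all
  ultimately have mono: "real (Suc j) ^ j / real (Suc n) ^ n \<le> real j ^ j / real n ^ n"
    by (simp add: field_simps)
  have "real (Suc n choose k) / binomial_entropy_bound k (Suc n)
      = real (Suc n choose k) * real (Suc j) * real k ^ k * real (Suc j) ^ j / real (Suc n) ^ Suc n"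
    unfolding binomial_entropy_bound_def Suc_j by (simp add: field_simps)
  also have "\<dots> = real (n choose k) * real k ^ k * (real (Suc j) ^ j / real (Suc n) ^ n)"
    unfolding absorb power_Suc by (simp add: ac_simps)
  also have "\<dots> \<le> real (n choose k) * real k ^ k * (real j ^ j / real n ^ n)"
    using mono by (intro mult_left_mono) simp_all
  also have "\<dots> = real (n choose k) / binomial_entropy_bound k n"
    unfolding binomial_entropy_bound_def j_def by (simp add: field_simps)
  finally show ?thesis .
qed

lemma binomial_div_entropy_bound_antimono:
  assumes "k \<le> m" "m \<le> n"
  shows "real (n choose k) / binomial_entropy_bound k n \<le> real (m choose k) / binomial_entropy_bound k m"
  using assms(2)
proof (induction n rule: dec_induct)
  case (step n)
  then show ?case
    using binomial_div_entropy_bound_Suc_le[of k n] assms(1) by linarith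
qed simp

lemma binomial_ratio_le_entropy_bound_ratio:
  assumes "k \<le> m" "m \<le> n"
  shows "real (n choose k) / real (m choose k) \<le> binomial_entropy_bound k n / binomial_entropy_bound k m"
proof -
  have "binomial_entropy_bound k n > 0" "binomial_entropy_bound k m > 0" "real (m choose k) > 0"
    using assms by (simp_all add: binomial_entropy_bound_pos)
  then show ?thesis
    using binomial_div_entropy_bound_antimono[OF assms] by (simp add: field_simps)
qed

lemma power_self_div_power_diff_le:
  assumes "k \<le> n"
  shows "real n ^ n / real (n - k) ^ (n - k) \<le> real n ^ k * exp (real k)"
proof (cases "k = n")
  case False
  have "real n ^ n / real (n - k) ^ (n - k) = real n ^ k * (1 + real k / real (n - k)) ^ (n - k)"
    using assms False by (simp add: field_simps power_add[symmetric] of_nat_diff)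
  also have "\<dots> \<le> real n ^ k * exp (real k)"
    using assms False by (intro mult_left_mono exp_ge_one_plus_x_over_n_power_n) simp_all
  finally show ?thesis .
qed (simp add: mult_le_cancel_left1)

lemma power_self_div_power_diff_ge:
  assumes "k \<le> m" "0 < m"
  shows "real m ^ k * exp (real k - real k ^ 2 / real m) \<le> real m ^ m / real (m - k) ^ (m - k)"
proof (cases "k = m")
  case False
  define x where "x = real k / real m * real (m - k)"
  have x: "x / real (m - k) = real k / real m" "x = real k - real k ^ 2 / real m"
    using assms False by (simp_all add: x_def field_simps of_nat_diff power2_eq_square)
  have "x \<le> real (m - k)"
    unfolding x_def using assms by (intro mult_left_le_one_le) simp_all
  have pos: "0 < (1 - real k / real m) ^ (m - k)"
    using assms False by simp
  have "(1 - real k / real m) ^ (m - k) \<le> exp (- x)"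
    using exp_ge_one_minus_x_over_n_power_n[of x "m - k"] x \<open>x \<le> real (m - k)\<close> assms False by simp
  then have "exp x \<le> 1 / (1 - real k / real m) ^ (m - k)"
    using pos by (simp add: exp_minus field_simps)
  then have "real m ^ k * exp x \<le> real m ^ k * (1 / (1 - real k / real m) ^ (m - k))"
    by (rule mult_left_mono) simp
  also have "\<dots> = real m ^ m / real (m - k) ^ (m - k)"
    using assms False by (simp add: field_simps power_add[symmetric] of_nat_diff)
  finally show ?thesis by (simp add: x)
qed (simp add: power2_eq_square)

lemma binomial_entropy_bound_ratio_le:
  assumes "k \<le> m" "m \<le> n"
  shows "binomial_entropy_bound k n / binomial_entropy_bound k m \<le> (real n / real m) ^ k * exp (real k ^ 2 / real m)"
proof (cases "m = 0")
  case False
  have "binomial_entropy_bound k n / binomial_entropy_bound k m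
      = (real n ^ n / real (n - k) ^ (n - k)) / (real m ^ m / real (m - k) ^ (m - k))"
    using assms False by (simp add: binomial_entropy_bound_def field_simps)
  also have "\<dots> \<le> (real n ^ k * exp (real k)) / (real m ^ k * exp (real k - real k ^ 2 / real m))"
    using assms False
    by (intro frac_le power_self_div_power_diff_le power_self_div_power_diff_ge) simp_all
  also have "\<dots> = (real n / real m) ^ k * exp (real k ^ 2 / real m)"
    by (simp add: power_divide exp_diff field_simps)
  finally show ?thesis .
qed (use assms in \<open>simp add: binomial_entropy_bound_def\<close>)

theorem lemma6:
  fixes n m k :: nat
  assumes "n \<ge> m" and "m \<ge> k"
  shows "(real n / real m) ^ k
           \<le> (real n / real m) ^ k * exp ((real n - real m) / (real n * real m) * (real k * (real k - 1) / 2))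
       \<and> (real n / real m) ^ k * exp ((real n - real m) / (real n * real m) * (real k * (real k - 1) / 2))
           \<le> real (n choose k) / real (m choose k)
       \<and> real (n choose k) / real (m choose k)
           \<le> exp (real n * bin_entropy (real k / real n)) / exp (real m * bin_entropy (real k / real m))
       \<and> exp (real n * bin_entropy (real k / real n)) / exp (real m * bin_entropy (real k / real m))
           \<le> (real n / real m) ^ k * exp (real k ^ 2 / real m)"
proof (intro conjI)
  have "0 \<le> (real n - real m) / (real n * real m) * (real k * (real k - 1) / 2)"
    using assms by (cases k) simp_all
  then show "(real n / real m) ^ k
      \<le> (real n / real m) ^ k * exp ((real n - real m) / (real n * real m) * (real k * (real k - 1) / 2))"
    using mult_left_mono[of 1 _ "(real n / real m) ^ k"] by simp
  show "(real n / real m) ^ k * exp ((real n - real m) / (real n * real m) * (real k * (real k - 1) / 2))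
      \<le> real (n choose k) / real (m choose k)"
    using binomial_ratio_ge_exp assms by simp
  have entropy: "exp (real n * bin_entropy (real k / real n)) = binomial_entropy_bound k n"
    "exp (real m * bin_entropy (real k / real m)) = binomial_entropy_bound k m"
    using assms by (simp_all add: exp_mult_bin_entropy)
  show "real (n choose k) / real (m choose k)
      \<le> exp (real n * bin_entropy (real k / real n)) / exp (real m * bin_entropy (real k / real m))"
    unfolding entropy using binomial_ratio_le_entropy_bound_ratio assms by simp
  show "exp (real n * bin_entropy (real k / real n)) / exp (real m * bin_entropy (real k / real m))
      \<le> (real n / real m) ^ k * exp (real k ^ 2 / real m)"
    unfolding entropy using binomial_entropy_bound_ratio_le assms by simp
qed

end
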